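(* Let $N\ge2$ and $r\ge1$ be integers, let $(z_1,\dots,z_r)\in\mathbb C^r$ with $|z_i|\le1$ for all $i$, let $K\subset\mathbb C^r$ be compact, and let $k_0$ be the smallest non-negative integer such that $(s_1+k_0,s_2,\dots,s_r)\in U_r$ for all $(s_1,\dots,s_r)\in K$. Then the family of functions $$f_{\mathbf n,k}(s_1,\dots,s_r)=\frac{(s_1-1)_{k+1}}{(k+1)!}\,\frac{z_1^{n_1}z_2^{n_2}\cdots z_r^{n_r}}{n_1^{s_1+k}n_2^{s_2}\cdots n_r^{s_r}},\qquad n_1\ge n_2\ge\cdots\ge n_r\ge N,\ k\ge k_0,$$ converges normally on $K$, i.e. $\Sigma_N:=\sum_{k\ge k_0}\sum_{n_1\ge\cdots\ge n_r\ge N}\sup_K|f_{\mathbf n,k}|<\infty$. Moreover, there is $\epsilon>0$ such that $\Sigma_N=O(N^{-\epsilon})$ as $N\to\infty$.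
   Context: $U_r:=\{(s_1,\dots,s_r)\in\mathbb C^r:\Re(s_1+\cdots+s_i)>i\text{ for all }1\le i\le r\}$. $(s)_k=s(s+1)\cdots(s+k-1)$ is the Pochhammer symbol. *)

theory Defs
  imports "HOL-Analysis.Analysis"
begin

text \<open>Points of C^r are functions nat \<Rightarrow> complex, coordinates s 1, ..., s r
  (product topology on nat \<Rightarrow> complex).\<close>

definition U :: "nat \<Rightarrow> (nat \<Rightarrow> complex) set" where
  "U r = {s. \<forall>i\<in>{1..r}. Re (\<Sum>j=1..i. s j) > real i}"

definition k0 :: "nat \<Rightarrow> (nat \<Rightarrow> complex) set \<Rightarrow> nat" where
  "k0 r K = (LEAST k. \<forall>s\<in>K. s(1 := s 1 + of_nat k) \<in> U r)"

definition idx :: "nat \<Rightarrow> nat \<Rightarrow> (nat \<Rightarrow> nat) set" where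
  "idx r N = {n. (\<forall>j\<in>{1..<r}. n (j+1) \<le> n j) \<and> (\<forall>j\<in>{1..r}. N \<le> n j)
                 \<and> (\<forall>j. j \<notin> {1..r} \<longrightarrow> n j = 0)}"

definition fterm :: "nat \<Rightarrow> (nat \<Rightarrow> complex) \<Rightarrow> (nat \<Rightarrow> nat) \<Rightarrow> nat \<Rightarrow> (nat \<Rightarrow> complex) \<Rightarrow> complex" where
  "fterm r z n k s =
     pochhammer (s 1 - 1) (k+1) / fact (k+1) * (\<Prod>j=1..r. z j ^ n j)
     / (of_nat (n 1) powr (s 1 + of_nat k) * (\<Prod>j=2..r. of_nat (n j) powr s j))"

definition SigmaN :: "nat \<Rightarrow> (nat \<Rightarrow> complex) \<Rightarrow> (nat \<Rightarrow> complex) set \<Rightarrow> nat \<Rightarrow> ennreal" where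
  "SigmaN r z K N = infsum (\<lambda>(k, n). SUP s\<in>K. ennreal (norm (fterm r z n k s)))
                      {(k, n). k0 r K \<le> k \<and> n \<in> idx r N}"

end

theory Submission
  imports Defs
begin

text \<open>Fix k \<ge> k0 and s \<in> K, and let \<sigma> be the real parts of (s1 + k0, s2, ..., sr).
  Compactness of K yields a uniform margin \<epsilon> > 0 with \<sigma>1 + ... + \<sigma>i \<ge> i (1 + 2\<epsilon>), and
  Abel summation along the decreasing tuple n1 \<ge> ... \<ge> nr turns it into
  n1^\<sigma>1 ... nr^\<sigma>r \<ge> (n1 ... nr)^(1 + 2\<epsilon>). Spending \<epsilon> of the exponent on nj \<ge> N and
  using n1^(k - k0) \<ge> 2^(k - k0), one gets
  sup_K |f_{n,k}| \<le> (A)_{k+1} / (k+1)! * 2^(k0 - k) * N^-\<epsilon> * (n1 ... nr)^-(1 + \<epsilon>),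
  where A bounds |s1 - 1| on K. The sum over k is dominated by a binomial series for
  (1 - 1/2)^-A, the sum over n by \<zeta>(1 + \<epsilon>)^r, so \<Sigma>_N = O(N^-\<epsilon>).\<close>

lemma sum_fun_upd_add:
  fixes s :: "'a \<Rightarrow> 'b::comm_monoid_add"
  assumes "finite A" "a \<in> A"
  shows "(\<Sum>j\<in>A. (s(a := s a + w)) j) = (\<Sum>j\<in>A. s j) + w"
proof -
  have "(\<Sum>j\<in>A. (s(a := s a + w)) j) = (\<Sum>j\<in>A. s j + (if j = a then w else 0))"
    by (intro sum.cong) auto
  with assms show ?thesis
    by (simp add: sum.distrib)
qed

lemma abel_summation_nonneg:
  fixes a x :: "nat \<Rightarrow> real"
  assumes "\<forall>i\<in>{1..r}. 0 \<le> (\<Sum>j=1..i. a j)"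
    and "antimono_on {1..r} x"
    and "\<forall>j\<in>{1..r}. 0 \<le> x j"
  shows "0 \<le> (\<Sum>j=1..r. a j * x j)"
  using assms
proof (induction r arbitrary: x)
  case 0
  then show ?case by simp
next
  case (Suc r)
  define y where "y j = x j - x (Suc r)" for j
  have "0 \<le> (\<Sum>j=1..r. a j * y j)"
  proof (rule Suc.IH)
    show "\<forall>i\<in>{1..r}. 0 \<le> (\<Sum>j=1..i. a j)"
      using Suc.prems(1) by simp
    show "antimono_on {1..r} y"
      using Suc.prems(2) by (auto simp: y_def monotone_on_def)
    show "\<forall>j\<in>{1..r}. 0 \<le> y j"
      using Suc.prems(2) by (auto simp: y_def monotone_on_def)
  qed
  moreover have "0 \<le> (\<Sum>j=1..Suc r. a j) * x (Suc r)"
    using Suc.prems(1)[rule_format, of "Suc r"] Suc.prems(3) by (intro mult_nonneg_nonneg) auto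
  moreover have "(\<Sum>j=1..Suc r. a j * x j) = (\<Sum>j=1..r. a j * y j) + (\<Sum>j=1..Suc r. a j) * x (Suc r)"
    unfolding y_def by (simp add: algebra_simps sum_subtractf sum_distrib_left)
  ultimately show ?case
    by linarith
qed

lemma prod_powr_le_prod_powr_of_partial_sums:
  fixes x \<sigma> :: "nat \<Rightarrow> real"
  assumes "\<forall>i\<in>{1..r}. real i * c \<le> (\<Sum>j=1..i. \<sigma> j)"
    and "antimono_on {1..r} x"
    and "\<forall>j\<in>{1..r}. 1 \<le> x j"
  shows "(\<Prod>j=1..r. x j powr c) \<le> (\<Prod>j=1..r. x j powr \<sigma> j)"
proof -
  have "0 \<le> (\<Sum>j=1..r. (\<sigma> j - c) * ln (x j))"
  proof (rule abel_summation_nonneg)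
    show "\<forall>i\<in>{1..r}. 0 \<le> (\<Sum>j=1..i. \<sigma> j - c)"
      using assms(1) by (simp add: sum_subtractf)
    show "antimono_on {1..r} (\<lambda>j. ln (x j))"
      using assms(2,3) by (auto simp: monotone_on_def intro!: ln_mono)
    show "\<forall>j\<in>{1..r}. 0 \<le> ln (x j)"
      using assms(3) by simp
  qed
  then have "(\<Sum>j=1..r. c * ln (x j)) \<le> (\<Sum>j=1..r. \<sigma> j * ln (x j))"
    by (simp add: algebra_simps sum_subtractf)
  moreover have prod_exp: "(\<Prod>j=1..r. x j powr e j) = exp (\<Sum>j=1..r. e j * ln (x j))" for e
    using assms(3) by (auto simp: exp_sum powr_def intro!: prod.cong)
  ultimately show ?thesis
    by (simp only: prod_exp) simp
qed

lemma norm_pochhammer_le: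
  fixes x :: "'a::real_normed_field"
  assumes "norm x \<le> A"
  shows "norm (pochhammer x n) \<le> pochhammer A n"
proof (induction n)
  case 0
  then show ?case by simp
next
  case (Suc n)
  have "norm (x + of_nat n) \<le> A + of_nat n"
    using assms norm_triangle_ineq[of x "of_nat n"] by simp
  with Suc have "norm (pochhammer x n) * norm (x + of_nat n) \<le> pochhammer A n * (A + of_nat n)"
    by (intro mult_mono) (auto intro: order_trans[OF norm_ge_zero])
  then show ?case
    by (simp add: pochhammer_Suc norm_mult)
qed

lemma summable_pochhammer_div_fact_mult_power:
  fixes a x :: real
  assumes "\<bar>x\<bar> < 1"
  shows "summable (\<lambda>n. pochhammer a n / fact n * x ^ n)"
proof -
  have "((-a) gchoose n) * (-x) ^ n = ((-1) * (-1)) ^ n * (pochhammer a n / fact n * x ^ n)" for n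
    unfolding gbinomial_pochhammer power_minus[of x] power_mult_distrib by simp
  then show ?thesis
    using sums_summable[OF gen_binomial_real[of "-x" "-a"]] assms by simp
qed

lemma infsum_le_of_product_majorant:
  fixes f :: "'a \<times> 'b \<Rightarrow> ennreal" and a :: "'a \<Rightarrow> real" and b :: "'b \<Rightarrow> real"
  assumes f_le: "\<And>x y. (x, y) \<in> S \<Longrightarrow> f (x, y) \<le> ennreal (a x * b y)"
    and a_nonneg: "\<And>x. 0 \<le> a x" and b_nonneg: "\<And>y. 0 \<le> b y"
    and a_sums: "\<And>X. finite X \<Longrightarrow> X \<subseteq> fst ` S \<Longrightarrow> sum a X \<le> A"
    and b_sums: "\<And>Y. finite Y \<Longrightarrow> Y \<subseteq> snd ` S \<Longrightarrow> sum b Y \<le> B"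
  shows "infsum f S \<le> ennreal (A * B)"
proof (rule infsum_le_finite_sums)
  show "f summable_on S"
    by (rule nonneg_summable_on_complete) simp
  fix F assume F: "finite F" "F \<subseteq> S"
  have "sum f F \<le> (\<Sum>(x, y)\<in>F. ennreal (a x * b y))"
    using F f_le by (intro sum_mono) auto
  also have "\<dots> = ennreal (\<Sum>(x, y)\<in>F. a x * b y)"
    using a_nonneg b_nonneg by (simp add: case_prod_beta)
  also have "\<dots> \<le> ennreal (\<Sum>(x, y)\<in>fst ` F \<times> snd ` F. a x * b y)"
    using F a_nonneg b_nonneg by (intro ennreal_leI sum_mono2) (auto intro: rev_image_eqI)
  also have "\<dots> = ennreal (sum a (fst ` F) * sum b (snd ` F))"
    by (simp add: sum_product sum.cartesian_product)
  also have "\<dots> \<le> ennreal (A * B)"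
  proof (intro ennreal_leI mult_mono)
    show "sum a (fst ` F) \<le> A" "sum b (snd ` F) \<le> B"
      using F by (auto intro!: a_sums b_sums)
    show "0 \<le> A"
      using a_sums[of "{}"] by simp
    show "0 \<le> sum b (snd ` F)"
      using b_nonneg by (simp add: sum_nonneg)
  qed
  finally show "sum f F \<le> ennreal (A * B)" .
qed

lemma sum_prod_le_suminf_power:
  fixes g :: "nat \<Rightarrow> real" and G :: "('a \<Rightarrow> nat) set"
  assumes g_nonneg: "\<And>m. 0 \<le> g m" and "summable g"
    and "finite G" "finite J"
    and G_supp: "\<And>n j. n \<in> G \<Longrightarrow> j \<notin> J \<Longrightarrow> n j = 0"
  shows "(\<Sum>n\<in>G. \<Prod>j\<in>J. g (n j)) \<le> suminf g ^ card J"
proof -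
  define M where "M = (\<Sum>n\<in>G. \<Sum>j\<in>J. n j)"
  have inj: "inj_on (\<lambda>n. restrict n J) G"
    by (rule inj_onI) (metis G_supp restrict_apply' ext)
  have "n j \<le> M" if "n \<in> G" "j \<in> J" for n j
    using that assms(3,4) unfolding M_def
    by (meson member_le_sum order_trans sum_nonneg zero_le)
  then have image: "(\<lambda>n. restrict n J) ` G \<subseteq> PiE J (\<lambda>_. {..M})"
    by auto
  have "(\<Sum>n\<in>G. \<Prod>j\<in>J. g (n j)) = (\<Sum>p\<in>(\<lambda>n. restrict n J) ` G. \<Prod>j\<in>J. g (p j))"
    by (simp add: sum.reindex[OF inj])
  also have "\<dots> \<le> (\<Sum>p\<in>PiE J (\<lambda>_. {..M}). \<Prod>j\<in>J. g (p j))"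
    using image g_nonneg assms(4) by (intro sum_mono2 finite_PiE prod_nonneg) auto
  also have "\<dots> = (\<Prod>j\<in>J. \<Sum>m\<le>M. g m)"
    using assms(4) by (subst prod_sum_PiE) auto
  also have "\<dots> \<le> suminf g ^ card J"
    unfolding prod_constant using g_nonneg assms(2) by (intro power_mono sum_le_suminf sum_nonneg) auto
  finally show ?thesis .
qed

lemma continuous_on_coordinate [continuous_intros]:
  "continuous_on S (\<lambda>x. x i :: 'b::topological_space)"
  by (rule continuous_on_product_then_coordinatewise[OF continuous_on_id])

lemma compact_uniform_positive_lower_bound:
  fixes f :: "'i \<Rightarrow> 'a::topological_space \<Rightarrow> real"
  assumes "compact K" "finite I"
    and "\<And>i. i \<in> I \<Longrightarrow> continuous_on K (f i)"
    and "\<And>i x. i \<in> I \<Longrightarrow> x \<in> K \<Longrightarrow> 0 < f i x"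
  shows "\<exists>d>0. \<forall>i\<in>I. \<forall>x\<in>K. d \<le> f i x"
  using assms(2-4)
proof (induction I rule: finite_induct)
  case empty
  show ?case by (rule exI[of _ 1]) simp
next
  case (insert i I)
  obtain d where d: "d > 0" "\<forall>i\<in>I. \<forall>x\<in>K. d \<le> f i x"
    using insert by blast
  obtain e where e: "e > 0" "\<forall>x\<in>K. e \<le> f i x"
  proof (cases "K = {}")
    case True
    then show thesis by (intro that[of 1]) auto
  next
    case False
    then obtain t where "t \<in> K" "\<forall>x\<in>K. f i t \<le> f i x"
      using continuous_attains_inf[OF assms(1)] insert.prems(1) by blast
    then show thesis using insert.prems(2) by (intro that[of "f i t"]) auto
  qed
  show ?case
    using d e by (intro exI[of _ "min d e"]) (force intro: min.coboundedI1 min.coboundedI2)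
qed

lemma compact_bounded_sum_norm_coordinates:
  fixes K :: "('a \<Rightarrow> 'b::real_normed_vector) set"
  assumes "compact K"
  shows "\<exists>M>0. \<forall>s\<in>K. (\<Sum>j\<in>J. norm (s j)) \<le> M"
proof -
  have "compact ((\<lambda>s. \<Sum>j\<in>J. norm (s j)) ` K)"
    using assms by (intro compact_continuous_image continuous_intros)
  then obtain M where "M > 0" "\<forall>x\<in>(\<lambda>s. \<Sum>j\<in>J. norm (s j)) ` K. norm x \<le> M"
    using compact_imp_bounded bounded_pos by blast
  then show ?thesis
    by (intro exI[of _ M]) (auto dest: abs_le_D1)
qed

lemma shift_first_in_U_iff:
  "s(1 := s 1 + of_nat k) \<in> U r \<longleftrightarrow> (\<forall>i\<in>{1..r}. real i < Re (\<Sum>j=1..i. s j) + real k)"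
proof -
  have "Re (\<Sum>j=1..i. (s(1 := s 1 + of_nat k)) j) = Re (\<Sum>j=1..i. s j) + real k"
    if "i \<in> {1..r}" for i
    using that by (subst sum_fun_upd_add) auto
  then show ?thesis
    unfolding U_def by (auto simp del: fun_upd_apply Re_sum)
qed

lemma Re_partial_sum_add_k0_gt:
  fixes K :: "(nat \<Rightarrow> complex) set"
  assumes "compact K" "s \<in> K" "i \<in> {1..r}"
  shows "real i < Re (\<Sum>j=1..i. s j) + real (k0 r K)"
proof -
  obtain M where M: "\<forall>s\<in>K. (\<Sum>j=1..r. norm (s j)) \<le> M"
    using compact_bounded_sum_norm_coordinates[OF assms(1)] by blast
  have "- M \<le> Re (\<Sum>j=1..l. t j)" if "t \<in> K" "l \<in> {1..r}" for t l
  proof -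
    have "- Re (\<Sum>j=1..l. t j) \<le> norm (\<Sum>j=1..l. t j)"
      by (rule abs_le_D2[OF abs_Re_le_cmod])
    also have "\<dots> \<le> (\<Sum>j=1..l. norm (t j))"
      by (rule norm_sum)
    also have "\<dots> \<le> (\<Sum>j=1..r. norm (t j))"
      using that by (intro sum_mono2) auto
    also have "\<dots> \<le> M"
      using M that(1) by blast
    finally show ?thesis
      by linarith
  qed
  moreover have "M \<le> real (nat \<lceil>M\<rceil>)"
    by (rule real_nat_ceiling_ge)
  ultimately have "\<forall>s\<in>K. s(1 := s 1 + of_nat (nat \<lceil>M\<rceil> + r + 1)) \<in> U r"
    unfolding shift_first_in_U_iff by fastforce
  then have "\<forall>s\<in>K. s(1 := s 1 + of_nat (k0 r K)) \<in> U r"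
    unfolding k0_def by (rule LeastI)
  then show ?thesis
    using assms(2,3) shift_first_in_U_iff by blast
qed

lemma compact_uniform_margin_k0:
  fixes K :: "(nat \<Rightarrow> complex) set"
  assumes "compact K"
  shows "\<exists>\<epsilon>>0. \<forall>s\<in>K. \<forall>i\<in>{1..r}. real i * (1 + \<epsilon>) \<le> Re (\<Sum>j=1..i. s j) + real (k0 r K)"
proof -
  let ?f = "\<lambda>i s. (Re (\<Sum>j=1..i. s j) + real (k0 r K)) / real i - 1"
  have "0 < ?f i s" if "i \<in> {1..r}" "s \<in> K" for i s
    using Re_partial_sum_add_k0_gt[OF assms that(2,1)] that(1) by (simp add: field_simps)
  moreover have "continuous_on K (?f i)" if "i \<in> {1..r}" for i
    using that by (intro continuous_intros) auto
  ultimately obtain d where "d > 0" "\<forall>i\<in>{1..r}. \<forall>s\<in>K. d \<le> ?f i s"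
    using compact_uniform_positive_lower_bound[OF assms, of "{1..r}" ?f] by auto
  then show ?thesis
    by (intro exI[of _ d]) (auto simp: field_simps)
qed

lemma idx_antimono:
  assumes "n \<in> idx r N"
  shows "antimono_on {1..r} n"
proof (rule monotone_onI)
  fix i j :: nat assume "i \<in> {1..r}" "j \<in> {1..r}" "i \<le> j"
  from \<open>i \<le> j\<close> \<open>j \<in> {1..r}\<close> \<open>i \<in> {1..r}\<close> show "n j \<le> n i"
  proof (induction j rule: dec_induct)
    case (step m)
    then have "n (m + 1) \<le> n m"
      using assms by (auto simp: idx_def)
    with step show ?case by simp
  qed simp
qed

lemma norm_fterm:
  "norm (fterm r z n k s) =
     norm (pochhammer (s 1 - 1) (k + 1)) / fact (k + 1) * (\<Prod>j=1..r. norm (z j) ^ n j)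
     / (real (n 1) powr (Re (s 1) + real k) * (\<Prod>j=2..r. real (n j) powr Re (s j)))"
proof -
  have "norm (fact (k + 1) :: complex) = fact (k + 1)"
    by (metis norm_of_nat of_nat_fact)
  then show ?thesis
    unfolding fterm_def norm_divide norm_mult prod_norm[symmetric] norm_power
    by (simp add: norm_powr_real_powr)
qed

lemma fterm_denominator_ge:
  assumes "1 \<le> r" "2 \<le> N" "n \<in> idx r N" "\<kappa> \<le> k" "0 \<le> \<epsilon>"
    and margin: "\<forall>i\<in>{1..r}. real i * (1 + 2 * \<epsilon>) \<le> Re (\<Sum>j=1..i. s j) + real \<kappa>"
  shows "2 ^ (k - \<kappa>) * real N powr \<epsilon> * (\<Prod>j=1..r. real (n j) powr (1 + \<epsilon>))
         \<le> real (n 1) powr (Re (s 1) + real k) * (\<Prod>j=2..r. real (n j) powr Re (s j))"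
proof -
  define \<sigma> where "\<sigma> = (\<lambda>j. Re (s j))(1 := Re (s 1) + real \<kappa>)"
  have n_ge: "N \<le> n j" if "j \<in> {1..r}" for j
    using assms(3) that by (auto simp: idx_def)
  have sigma_sum: "(\<Sum>j=1..i. \<sigma> j) = Re (\<Sum>j=1..i. s j) + real \<kappa>" if "i \<in> {1..r}" for i
    unfolding \<sigma>_def using that by (subst sum_fun_upd_add) auto
  have abel: "(\<Prod>j=1..r. real (n j) powr (1 + 2 * \<epsilon>)) \<le> (\<Prod>j=1..r. real (n j) powr \<sigma> j)"
  proof (rule prod_powr_le_prod_powr_of_partial_sums)
    show "\<forall>i\<in>{1..r}. real i * (1 + 2 * \<epsilon>) \<le> (\<Sum>j=1..i. \<sigma> j)"
      using margin sigma_sum by simp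
    show "antimono_on {1..r} (\<lambda>j. real (n j))"
      using idx_antimono[OF assms(3)] by (simp add: monotone_on_def)
    show "\<forall>j\<in>{1..r}. 1 \<le> real (n j)"
      using n_ge assms(2) by fastforce
  qed
  have N_powr: "real N powr \<epsilon> \<le> (\<Prod>j=1..r. real (n j) powr \<epsilon>)"
  proof -
    have "real N powr \<epsilon> \<le> (real N powr \<epsilon>) ^ r"
      using assms(1,2,5) by (intro self_le_power ge_one_powr_ge_zero) auto
    also have "\<dots> = (\<Prod>j=1..r. real N powr \<epsilon>)"
      by simp
    also have "\<dots> \<le> (\<Prod>j=1..r. real (n j) powr \<epsilon>)"
      using n_ge assms(5) by (intro prod_mono) (auto intro: powr_mono2)
    finally show ?thesis .
  qed
  have two_powr: "2 ^ (k - \<kappa>) \<le> real (n 1) powr real (k - \<kappa>)"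
    using n_ge[of 1] assms(1,2) by (simp add: powr_realpow[symmetric] powr_mono2)
  have "2 ^ (k - \<kappa>) * real N powr \<epsilon> * (\<Prod>j=1..r. real (n j) powr (1 + \<epsilon>))
      \<le> real (n 1) powr real (k - \<kappa>)
         * ((\<Prod>j=1..r. real (n j) powr \<epsilon>) * (\<Prod>j=1..r. real (n j) powr (1 + \<epsilon>)))"
    using two_powr N_powr by (simp add: mult.assoc mult_mono mult_right_mono prod_nonneg)
  also have "\<dots> = real (n 1) powr real (k - \<kappa>) * (\<Prod>j=1..r. real (n j) powr (1 + 2 * \<epsilon>))"
    by (simp add: prod.distrib[symmetric] powr_add[symmetric] add_ac)
  also have "\<dots> \<le> real (n 1) powr real (k - \<kappa>) * (\<Prod>j=1..r. real (n j) powr \<sigma> j)"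
    using abel by (simp add: mult_left_mono)
  also have "\<dots> = real (n 1) powr (Re (s 1) + real k) * (\<Prod>j=2..r. real (n j) powr Re (s j))"
  proof -
    have "(\<Prod>j=1..r. real (n j) powr \<sigma> j) = real (n 1) powr \<sigma> 1 * (\<Prod>j=2..r. real (n j) powr \<sigma> j)"
      using assms(1) by (simp add: prod.atLeast_Suc_atMost numeral_2_eq_2)
    also have "(\<Prod>j=2..r. real (n j) powr \<sigma> j) = (\<Prod>j=2..r. real (n j) powr Re (s j))"
      by (rule prod.cong) (auto simp: \<sigma>_def)
    finally show ?thesis
      using assms(4) by (simp add: \<sigma>_def powr_add[symmetric] algebra_simps)
  qed
  finally show ?thesis .
qed

lemma norm_fterm_le:
  assumes "1 \<le> r" "\<forall>i\<in>{1..r}. norm (z i) \<le> 1" "2 \<le> N" "n \<in> idx r N" "\<kappa> \<le> k"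
    and "norm (s 1 - 1) \<le> A" "0 \<le> \<epsilon>"
    and "\<forall>i\<in>{1..r}. real i * (1 + 2 * \<epsilon>) \<le> Re (\<Sum>j=1..i. s j) + real \<kappa>"
  shows "norm (fterm r z n k s)
         \<le> 2 ^ \<kappa> * (pochhammer A (k + 1) / fact (k + 1) / 2 ^ k)
           * (real N powr - \<epsilon> * (\<Prod>j=1..r. real (n j) powr - (1 + \<epsilon>)))"
proof -
  define P where "P = (\<Prod>j=1..r. real (n j) powr (1 + \<epsilon>))"
  define L where "L = 2 ^ (k - \<kappa>) * real N powr \<epsilon> * P"
  have "N \<le> n j" if "j \<in> {1..r}" for j
    using assms(4) that by (simp add: idx_def)
  then have "0 < real (n j)" if "j \<in> {1..r}" for j
    using assms(3) that by fastforce
  then have "0 < P"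
    unfolding P_def by (intro prod_pos) auto
  then have "0 < L"
    using assms(3) by (simp add: L_def)
  have poch: "norm (pochhammer (s 1 - 1) (k + 1)) \<le> pochhammer A (k + 1)"
    using assms(6) by (rule norm_pochhammer_le)
  then have "0 \<le> pochhammer A (k + 1)"
    using norm_ge_zero order_trans by blast
  have "(\<Prod>j=1..r. norm (z j) ^ n j) \<le> 1"
    using assms(2) by (intro prod_le_1) (auto intro: power_le_one)
  have "norm (fterm r z n k s) \<le> pochhammer A (k + 1) / fact (k + 1) * 1 / L"
    unfolding norm_fterm
  proof (rule frac_le)
    show "norm (pochhammer (s 1 - 1) (k + 1)) / fact (k + 1) * (\<Prod>j=1..r. norm (z j) ^ n j)
          \<le> pochhammer A (k + 1) / fact (k + 1) * 1"
      using poch \<open>(\<Prod>j=1..r. norm (z j) ^ n j) \<le> 1\<close> \<open>0 \<le> pochhammer A (k + 1)\<close>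
      by (intro mult_mono divide_right_mono) (auto simp: prod_nonneg)
    show "L \<le> real (n 1) powr (Re (s 1) + real k) * (\<Prod>j=2..r. real (n j) powr Re (s j))"
      unfolding L_def P_def using fterm_denominator_ge[OF assms(1,3-5,7-8)] .
  qed (use \<open>0 < L\<close> \<open>0 \<le> pochhammer A (k + 1)\<close> in auto)
  also have "\<dots> = 2 ^ \<kappa> * (pochhammer A (k + 1) / fact (k + 1) / 2 ^ k)
                  * (real N powr - \<epsilon> * (\<Prod>j=1..r. real (n j) powr - (1 + \<epsilon>)))"
  proof -
    have prod_eq: "(\<Prod>j=1..r. real (n j) powr - (1 + \<epsilon>)) = 1 / P"
      unfolding P_def powr_minus_divide prod_dividef by simp
    show ?thesis
      unfolding prod_eq powr_minus_divide[of "real N"] L_def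
      using assms(5) \<open>0 < P\<close> by (simp add: power_diff field_simps)
  qed
  finally show ?thesis .
qed

lemma SigmaN_le_const_mult_powr:
  fixes K :: "(nat \<Rightarrow> complex) set"
  assumes "1 \<le> r" "\<forall>i\<in>{1..r}. norm (z i) \<le> 1" "0 < A" "0 < \<epsilon>"
    and A: "\<forall>s\<in>K. norm (s 1 - 1) \<le> A"
    and margin: "\<forall>s\<in>K. \<forall>i\<in>{1..r}. real i * (1 + 2 * \<epsilon>) \<le> Re (\<Sum>j=1..i. s j) + real (k0 r K)"
  shows "\<exists>C. \<forall>N\<ge>2. SigmaN r z K N \<le> ennreal (C * real N powr - \<epsilon>)"
proof -
  define a where "a k = 2 ^ k0 r K * (pochhammer A (k + 1) / fact (k + 1) / 2 ^ k)" for k :: nat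
  define g where "g m = real m powr - (1 + \<epsilon>)" for m :: nat
  have a_nonneg: "0 \<le> a k" for k
    unfolding a_def using assms(3) by (intro mult_nonneg_nonneg divide_nonneg_nonneg pochhammer_nonneg) auto
  have "summable (\<lambda>k. pochhammer A (k + 1) / fact (k + 1) * (1 / 2) ^ (k + 1))"
    using summable_pochhammer_div_fact_mult_power[of "1 / 2" A]
    by (subst summable_iff_shift[where f = "\<lambda>k. pochhammer A k / fact k * (1 / 2) ^ k"]) simp
  then have "summable (\<lambda>k. 2 ^ k0 r K * 2 * (pochhammer A (k + 1) / fact (k + 1) * (1 / 2) ^ (k + 1)))"
    by (rule summable_mult)
  moreover have "a = (\<lambda>k. 2 ^ k0 r K * 2 * (pochhammer A (k + 1) / fact (k + 1) * (1 / 2) ^ (k + 1)))"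
    by (simp add: a_def fun_eq_iff power_one_over)
  ultimately have "summable a"
    by simp
  have "summable g"
    unfolding g_def using assms(4) by (simp add: summable_real_powr_iff)
  have "SigmaN r z K N \<le> ennreal (suminf a * (real N powr - \<epsilon> * suminf g ^ r))" if "2 \<le> N" for N
    unfolding SigmaN_def
  proof (rule infsum_le_of_product_majorant)
    fix k n assume "(k, n) \<in> {(k, n). k0 r K \<le> k \<and> n \<in> idx r N}"
    then have "norm (fterm r z n k s) \<le> a k * (real N powr - \<epsilon> * (\<Prod>j=1..r. g (n j)))" if "s \<in> K" for s
      unfolding a_def g_def
      using norm_fterm_le[OF assms(1,2) \<open>2 \<le> N\<close>, of n "k0 r K" k s A \<epsilon>] A margin that assms(4) by auto
    then show "(\<lambda>(k, n). SUP s\<in>K. ennreal (norm (fterm r z n k s))) (k, n)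
               \<le> ennreal (a k * (real N powr - \<epsilon> * (\<Prod>j=1..r. g (n j))))"
      by (auto intro!: SUP_least ennreal_leI)
  next
    fix X :: "nat set" assume "finite X"
    then show "sum a X \<le> suminf a"
      using \<open>summable a\<close> a_nonneg by (intro sum_le_suminf) auto
  next
    fix Y assume "finite Y" and Y_sub: "Y \<subseteq> snd ` {(k, n). k0 r K \<le> k \<and> n \<in> idx r N}"
    from Y_sub have "Y \<subseteq> idx r N"
      by (rule order_trans) auto
    with \<open>finite Y\<close> have "(\<Sum>n\<in>Y. \<Prod>j=1..r. g (n j)) \<le> suminf g ^ card {1..r}"
      by (intro sum_prod_le_suminf_power[OF _ \<open>summable g\<close>]) (auto simp: g_def idx_def)
    then show "(\<Sum>n\<in>Y. real N powr - \<epsilon> * (\<Prod>j=1..r. g (n j))) \<le> real N powr - \<epsilon> * suminf g ^ r"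
      by (simp add: sum_distrib_left[symmetric] mult_left_mono)
  qed (auto simp: a_nonneg g_def prod_nonneg)
  then show ?thesis
    by (intro exI[of _ "suminf a * suminf g ^ r"]) (simp add: mult_ac)
qed

theorem lemma5:
  fixes r :: nat and z :: "nat \<Rightarrow> complex" and K :: "(nat \<Rightarrow> complex) set"
  assumes "1 \<le> r"
    and "\<forall>i\<in>{1..r}. norm (z i) \<le> 1"
    and "compact K"
    and "\<forall>s\<in>K. \<forall>j. j \<notin> {1..r} \<longrightarrow> s j = 0"
  shows "(\<forall>N\<ge>2. SigmaN r z K N < \<infinity>) \<and>
         (\<exists>\<epsilon>>0. \<exists>C::real. eventually (\<lambda>N. SigmaN r z K N \<le> ennreal (C * real N powr (-\<epsilon>))) at_top)"
proof -
  obtain M where "M > 0" "\<forall>s\<in>K. (\<Sum>j\<in>{1}. norm (s j)) \<le> M"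
    using compact_bounded_sum_norm_coordinates[OF assms(3)] by blast
  then have A: "\<forall>s\<in>K. norm (s 1 - 1) \<le> M + 1"
    by (auto intro: order_trans[OF norm_triangle_ineq4])
  obtain \<delta> where "\<delta> > 0" and margin:
    "\<forall>s\<in>K. \<forall>i\<in>{1..r}. real i * (1 + 2 * (\<delta> / 2)) \<le> Re (\<Sum>j=1..i. s j) + real (k0 r K)"
    using compact_uniform_margin_k0[OF assms(3), where r = r] by auto
  then obtain C where C: "\<forall>N\<ge>2. SigmaN r z K N \<le> ennreal (C * real N powr - (\<delta> / 2))"
    using SigmaN_le_const_mult_powr[OF assms(1,2) _ _ A margin] \<open>M > 0\<close> by auto
  show ?thesis
  proof
    show "\<forall>N\<ge>2. SigmaN r z K N < \<infinity>"
      using C by (metis ennreal_less_top infinity_ennreal_def order_le_less_trans)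
    show "\<exists>\<epsilon>>0. \<exists>C::real. eventually (\<lambda>N. SigmaN r z K N \<le> ennreal (C * real N powr (-\<epsilon>))) at_top"
      using C \<open>\<delta> > 0\<close> by (intro exI[of _ "\<delta> / 2"] exI[of _ C] conjI eventually_at_top_linorderI[of 2]) auto
  qed
qed

end
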